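(* For every $\omega\in\mathbb C\setminus i\mathbb R$ and every $y\in\big((2\operatorname{Re}\omega)^{-1}\mathbb Z\big)\setminus\big(\omega^{-1}\mathbb Z\cup\bar\omega^{-1}\mathbb Z\big)$, $$\sum_{k\in\mathbb Z}\frac{|\omega|^2y^2-k^2}{|\omega|^4y^4-2\operatorname{Re}(\omega^2)k^2y^2+k^4}=0.$$ In particular, for every $n\in\mathbb Z\setminus\{0\}$, $$\sum_{k\in\mathbb Z}\frac{n^2-k^2}{n^4+n^2k^2+k^4}=0\qquad\text{and}\qquad\sum_{k\in\mathbb Z}\frac{n^2-2k^2}{n^4+4k^4}=0.$$ *)

theory Defs
  imports "HOL-Analysis.Analysis"
begin

end

(*
  Put u = \<omega> y. The hypotheses say that u + cnj u = 2 Re u is a nonzero integer m and that u is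
  not an integer; the summand is (u cnj u - k^2) / ((k^2 - u^2) (k^2 - cnj u^2)). Partial fractions,
  with cnj u = m - u, write it as (g (k + m) - g k + g (m - k) - g (- k)) / (2 m) for
  g j = 1 / (j - u), so the partial sum over [-N, N] telescopes to 2 m values of g near -N and N,
  which tend to 0. The summand is O(k^-2), so the series converges and its sum is 0.
  The two special cases are \<omega> = exp (i pi / 3), y = n and \<omega> = 1 + i, y = n / 2.
*)
theory Submission
  imports Defs
begin

lemma LIMSEQ_inverse_of_nat_add:
  "(\<lambda>N. inverse (of_nat N + z :: 'a::real_normed_field)) \<longlonglongrightarrow> 0"
proof -
  have "filterlim (\<lambda>N. of_nat N :: 'a) at_infinity sequentially"
    unfolding filterlim_at_infinity_conv_norm_at_top by (simp add: filterlim_real_sequentially)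
  then have "filterlim (\<lambda>N. of_nat N + z) at_infinity sequentially"
    by (rule tendsto_add_filterlim_at_infinity'[OF _ tendsto_const])
  then show ?thesis
    by (rule filterlim_compose[OF tendsto_inverse_0])
qed

lemma range_int_Un_range_uminus_int: "range int \<union> range (\<lambda>n. - int n) = UNIV"
proof safe
  fix k :: int
  assume k: "k \<notin> range (\<lambda>n. - int n)"
  have "\<not> k \<le> 0"
  proof
    assume "k \<le> 0"
    then have "k = - int (nat (- k))"
      by simp
    then have "k \<in> range (\<lambda>n. - int n)"
      by (rule image_eqI) simp
    with k show False ..
  qed
  then have "k = int (nat k)"
    by simp
  then show "k \<in> range int"
    by (rule image_eqI) simp
qed auto

lemma summable_on_int_if_norm_summable:
  fixes f :: "int \<Rightarrow> 'a::banach"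
  assumes "summable (\<lambda>n. norm (f (int n)))" and "summable (\<lambda>n. norm (f (- int n)))"
  shows "f summable_on UNIV"
proof -
  have "f summable_on range int"
    using norm_summable_imp_summable_on[OF assms(1)]
    by (subst summable_on_reindex) (auto simp: o_def)
  moreover have "f summable_on range (\<lambda>n. - int n)"
    using norm_summable_imp_summable_on[OF assms(2)]
    by (subst summable_on_reindex) (auto simp: o_def inj_on_def)
  then have "f summable_on (range (\<lambda>n. - int n) - range int)"
    by (rule summable_on_subset_banach) auto
  ultimately have "f summable_on (range int \<union> (range (\<lambda>n. - int n) - range int))"
    by (rule summable_on_Un_disjoint) auto
  then show ?thesis
    by (simp only: Un_Diff_cancel range_int_Un_range_uminus_int)
qed

lemma abs_quartic_quotient_le:
  fixes c B t :: real
  assumes "\<bar>B\<bar> \<le> c" and "2 * c < t"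
  shows "\<bar>(c - t) / (c ^ 2 - 2 * B * t + t ^ 2)\<bar> \<le> 2 / t"
proof -
  have "t > 0"
    using assms by auto
  have "(t - c) ^ 2 \<le> c ^ 2 - 2 * B * t + t ^ 2"
    using assms mult_right_mono[of B c t] \<open>t > 0\<close> by (auto simp: power2_eq_square algebra_simps)
  then have "\<bar>(c - t) / (c ^ 2 - 2 * B * t + t ^ 2)\<bar> \<le> (t - c) / (t - c) ^ 2"
    using assms \<open>t > 0\<close> by (auto simp: abs_div_pos intro!: frac_le)
  also have "\<dots> = 1 / (t - c)"
    using assms by (simp add: power2_eq_square)
  also have "\<dots> \<le> 2 / t"
    using assms \<open>t > 0\<close> by (simp add: field_simps)
  finally show ?thesis .
qed

lemma summable_on_quartic_quotient:
  fixes c B :: real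
  assumes "\<bar>B\<bar> \<le> c"
  shows "(\<lambda>k::int. (c - of_int k ^ 2) / (c ^ 2 - 2 * B * of_int k ^ 2 + of_int k ^ 4))
           summable_on UNIV"
proof (rule summable_on_int_if_norm_summable)
  have "filterlim (\<lambda>n. real n ^ 2) at_top sequentially"
    by (intro filterlim_pow_at_top filterlim_real_sequentially) auto
  then have "\<forall>\<^sub>F n in sequentially. 2 * c < real n ^ 2"
    by (simp add: filterlim_at_top_dense)
  then have "\<forall>\<^sub>F n in sequentially.
      norm (norm ((c - real n ^ 2) / (c ^ 2 - 2 * B * real n ^ 2 + real n ^ 4)))
        \<le> 2 * inverse (real n ^ 2)"
  proof eventually_elim
    case (elim n)
    then show ?case
      using abs_quartic_quotient_le[OF assms elim]
      by (simp add: divide_inverse flip: power_mult)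
  qed
  then have "summable (\<lambda>n. norm ((c - real n ^ 2) / (c ^ 2 - 2 * B * real n ^ 2 + real n ^ 4)))"
    by (rule summable_comparison_test_ev) (intro summable_mult inverse_power_summable; simp)
  then show "summable (\<lambda>n. norm ((c - of_int (int n) ^ 2) /
                 (c ^ 2 - 2 * B * of_int (int n) ^ 2 + of_int (int n) ^ 4)))"
    and "summable (\<lambda>n. norm ((c - of_int (- int n) ^ 2) /
                 (c ^ 2 - 2 * B * of_int (- int n) ^ 2 + of_int (- int n) ^ 4)))"
    by simp_all
qed

lemma has_sum_int_imp_LIMSEQ_symmetric_sums:
  fixes f :: "int \<Rightarrow> 'a::{comm_monoid_add,topological_space}"
  assumes "(f has_sum S) UNIV"
  shows "(\<lambda>N. \<Sum>k\<in>{-int N..int N}. f k) \<longlonglongrightarrow> S"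
proof -
  have "filterlim (\<lambda>N. {-int N..int N}) (finite_subsets_at_top UNIV) sequentially"
    unfolding filterlim_finite_subsets_at_top
  proof safe
    fix X :: "int set"
    assume "finite X"
    define b where "b = Max (insert 0 (abs ` X))"
    have "\<bar>x\<bar> \<le> b" if "x \<in> X" for x
      unfolding b_def using \<open>finite X\<close> that by (intro Max_ge) auto
    then have "X \<subseteq> {-int N..int N}" if "nat b \<le> N" for N
      using that by (force simp: abs_le_iff)
    then show "\<forall>\<^sub>F N in sequentially. finite {-int N..int N} \<and> X \<subseteq> {-int N..int N}
                 \<and> {-int N..int N} \<subseteq> UNIV"
      unfolding eventually_sequentially by auto
  qed
  then show ?thesis
    using assms unfolding has_sum_def by (rule filterlim_compose[rotated])
qed

lemma sum_int_interval_telescope: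
  fixes h :: "int \<Rightarrow> 'a::ab_group_add"
  shows "(\<Sum>k\<in>{-int N..int N}. h (k + 1) - h k) = h (int N + 1) - h (- int N)"
proof (induction N)
  case (Suc N)
  have "{-int (Suc N)..int (Suc N)} = insert (-1 - int N) (insert (int N + 1) {-int N..int N})"
    by auto
  then show ?case
    using Suc by (simp add: algebra_simps)
qed simp

lemma sum_int_interval_shift_diff:
  fixes h :: "int \<Rightarrow> 'a::ab_group_add"
  shows "(\<Sum>k\<in>{-int N..int N}. h (k + int m) - h k) =
           (\<Sum>i<m. h (int N + 1 + int i) - h (- int N + int i))"
proof (induction m)
  case (Suc m)
  have "(\<Sum>k\<in>{-int N..int N}. h (k + int (Suc m)) - h k) =
      (\<Sum>k\<in>{-int N..int N}. h (k + int m + 1) - h (k + int m)) +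
      (\<Sum>k\<in>{-int N..int N}. h (k + int m) - h k)"
    by (simp add: algebra_simps flip: sum.distrib)
  also have "(\<Sum>k\<in>{-int N..int N}. h (k + int m + 1) - h (k + int m)) =
      h (int N + 1 + int m) - h (- int N + int m)"
    using sum_int_interval_telescope[of "\<lambda>k. h (k + int m)" N] by (simp add: algebra_simps)
  finally show ?case
    using Suc by (simp add: algebra_simps)
qed simp

lemma LIMSEQ_sum_int_interval_shift_diff:
  fixes h :: "int \<Rightarrow> 'a::real_normed_vector"
  assumes "\<And>a. (\<lambda>N. h (int N + a)) \<longlonglongrightarrow> 0" and "\<And>a. (\<lambda>N. h (a - int N)) \<longlonglongrightarrow> 0"
  shows "(\<lambda>N. \<Sum>k\<in>{-int N..int N}. h (k + int m) - h k) \<longlonglongrightarrow> 0"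
proof -
  have "(\<lambda>N. \<Sum>i<m. h (int N + (1 + int i)) - h (int i - int N)) \<longlonglongrightarrow> (\<Sum>i<m. 0 - 0)"
    by (intro tendsto_sum tendsto_diff assms)
  then show ?thesis
    by (simp add: sum_int_interval_shift_diff algebra_simps)
qed

lemma has_sum_eq_0_if_symmetric_telescoping:
  fixes f g :: "int \<Rightarrow> 'a::real_normed_vector"
  assumes "f summable_on UNIV"
    and "\<And>k. f k = (g (k + int m) - g k) + (g (int m - k) - g (- k))"
    and "\<And>a. (\<lambda>N. g (int N + a)) \<longlonglongrightarrow> 0" and "\<And>a. (\<lambda>N. g (a - int N)) \<longlonglongrightarrow> 0"
  shows "(f has_sum 0) UNIV"
proof -
  have reflect: "(\<Sum>k\<in>{-int N..int N}. g (int m - k) - g (- k)) =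
      (\<Sum>k\<in>{-int N..int N}. g (k + int m) - g k)" for N
    by (rule sum.reindex_bij_witness[of _ uminus uminus]) auto
  have "(\<lambda>N. \<Sum>k\<in>{-int N..int N}. f k) \<longlonglongrightarrow> infsum f UNIV"
    using assms(1) by (intro has_sum_int_imp_LIMSEQ_symmetric_sums has_sum_infsum)
  moreover have "(\<lambda>N. \<Sum>k\<in>{-int N..int N}. f k) =
      (\<lambda>N. 2 *\<^sub>R (\<Sum>k\<in>{-int N..int N}. g (k + int m) - g k))"
    by (simp add: assms(2) sum.distrib reflect scaleR_2)
  moreover have "(\<lambda>N. 2 *\<^sub>R (\<Sum>k\<in>{-int N..int N}. g (k + int m) - g k)) \<longlonglongrightarrow> 2 *\<^sub>R 0"
    by (intro tendsto_scaleR tendsto_const LIMSEQ_sum_int_interval_shift_diff assms(3,4))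
  ultimately have "infsum f UNIV = 0"
    by (simp add: LIMSEQ_unique)
  then show ?thesis
    using assms(1) has_sum_infsum by fastforce
qed

lemma partial_fractions_quartic:
  fixes u v x :: "'a::field_char_0"
  assumes "x \<noteq> u" "x \<noteq> - u" "x \<noteq> v" "x \<noteq> - v" "u + v \<noteq> 0"
  shows "(u * v - x ^ 2) / ((x ^ 2 - u ^ 2) * (x ^ 2 - v ^ 2)) =
           (1 / (x + v) - 1 / (x - u) - 1 / (x - v) + 1 / (x + u)) / (2 * (u + v))"
proof -
  have nz: "x - u \<noteq> 0" "x + u \<noteq> 0" "x - v \<noteq> 0" "x + v \<noteq> 0"
    using assms by (auto simp: add_eq_0_iff2)
  have "x ^ 2 - u ^ 2 = (x - u) * (x + u)" "x ^ 2 - v ^ 2 = (x - v) * (x + v)"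
    by (simp_all add: power2_eq_square algebra_simps)
  then show ?thesis
    using nz assms(5) by (simp add: divide_simps) algebra
qed

lemma of_real_quartic_quotient_telescoping:
  fixes u :: complex and m :: nat and k :: int
  assumes "2 * Re u = real m" and "m > 0" and "\<And>k::int. u \<noteq> of_int k"
  defines "g \<equiv> \<lambda>j::int. inverse (of_int j - u) / (2 * of_nat m)"
  shows "complex_of_real ((cmod u ^ 2 - of_int k ^ 2) /
             (cmod u ^ 4 - 2 * Re (u ^ 2) * of_int k ^ 2 + of_int k ^ 4)) =
           (g (k + int m) - g k) + (g (int m - k) - g (- k))"
proof -
  define v where "v = cnj u"
  let ?x = "complex_of_int k"
  have uv: "u * v = of_real (cmod u ^ 2)"
    unfolding v_def by (simp only: complex_norm_square)
  have "u + v = of_nat m"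
    unfolding v_def using assms(1) by (simp add: complex_add_cnj)
  then have v: "v = of_nat m - u"
    by (simp add: algebra_simps)
  have u2v2: "u ^ 2 + v ^ 2 = of_real (2 * Re (u ^ 2))"
    unfolding v_def by (simp add: complex_add_cnj flip: complex_cnj_power)
  have poles: "?x \<noteq> u" "?x \<noteq> - u"
    using assms(3)[of k] assms(3)[of "- k"] by auto
  then have conj_poles: "?x \<noteq> v" "?x \<noteq> - v"
    unfolding v_def by (metis complex_cnj_cnj complex_cnj_of_int complex_cnj_minus)+
  have "u + v \<noteq> 0"
    using assms(2) \<open>u + v = of_nat m\<close> by simp
  have num: "complex_of_real (cmod u ^ 2 - of_int k ^ 2) = u * v - ?x ^ 2"
    unfolding uv by simp
  have "(?x ^ 2 - u ^ 2) * (?x ^ 2 - v ^ 2) = ?x ^ 4 - (u ^ 2 + v ^ 2) * ?x ^ 2 + (u * v) ^ 2"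
    by algebra
  also have "\<dots> = complex_of_real (cmod u ^ 4 - 2 * Re (u ^ 2) * of_int k ^ 2 + of_int k ^ 4)"
    unfolding uv u2v2 by (simp flip: power_mult)
  finally have "complex_of_real ((cmod u ^ 2 - of_int k ^ 2) /
        (cmod u ^ 4 - 2 * Re (u ^ 2) * of_int k ^ 2 + of_int k ^ 4)) =
      (u * v - ?x ^ 2) / ((?x ^ 2 - u ^ 2) * (?x ^ 2 - v ^ 2))"
    by (simp only: of_real_divide num)
  also have "\<dots> = (1 / (?x + v) - 1 / (?x - u) - 1 / (?x - v) + 1 / (?x + u)) / (2 * (u + v))"
    using poles conj_poles \<open>u + v \<noteq> 0\<close> by (rule partial_fractions_quartic)
  also have "\<dots> = (g (k + int m) - g k) + (g (int m - k) - g (- k))"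
  proof -
    have "g (k + int m) = 1 / (?x + v) / (2 * of_nat m)" "g k = 1 / (?x - u) / (2 * of_nat m)"
      "g (int m - k) = - (1 / (?x - v) / (2 * of_nat m))"
      "g (- k) = - (1 / (?x + u) / (2 * of_nat m))"
      unfolding g_def v by (simp_all add: inverse_eq_divide algebra_simps flip: divide_minus_right)
    then show ?thesis
      unfolding \<open>u + v = of_nat m\<close> by (simp add: diff_divide_distrib add_divide_distrib)
  qed
  finally show ?thesis .
qed

lemma has_sum_quartic_quotient_eq_0:
  fixes u :: complex and m :: nat
  assumes "2 * Re u = real m" and "m > 0" and "\<And>k::int. u \<noteq> of_int k"
  shows "((\<lambda>k::int. (cmod u ^ 2 - of_int k ^ 2) /
            (cmod u ^ 4 - 2 * Re (u ^ 2) * of_int k ^ 2 + of_int k ^ 4)) has_sum 0) UNIV"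
    (is "(?f has_sum 0) UNIV")
proof -
  define g where "g j = inverse (of_int j - u) / (2 * of_nat m)" for j :: int
  have "((\<lambda>k. complex_of_real (?f k)) has_sum 0) UNIV"
  proof (rule has_sum_eq_0_if_symmetric_telescoping)
    have "\<bar>Re (u ^ 2)\<bar> \<le> cmod u ^ 2"
      by (metis abs_Re_le_cmod norm_power)
    from summable_on_quartic_quotient[OF this] have "?f summable_on UNIV"
      by (simp flip: power_mult)
    then show "(\<lambda>k. complex_of_real (?f k)) summable_on UNIV"
      by (rule summable_on_of_real)
    show "\<And>k. complex_of_real (?f k) = (g (k + int m) - g k) + (g (int m - k) - g (- k))"
      unfolding g_def using assms by (rule of_real_quartic_quotient_telescoping)
    fix a :: int
    have "g (int N + a) = inverse (of_nat N + (of_int a - u)) / (2 * of_nat m)" for N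
      by (simp add: g_def add_ac diff_add_eq)
    then show "(\<lambda>N. g (int N + a)) \<longlonglongrightarrow> 0"
      by (simp add: tendsto_divide_zero LIMSEQ_inverse_of_nat_add)
    have "g (a - int N) = - inverse (of_nat N + (u - of_int a)) / (2 * of_nat m)" for N
      by (simp add: g_def flip: inverse_minus_eq)
    then show "(\<lambda>N. g (a - int N)) \<longlonglongrightarrow> 0"
      using tendsto_minus[OF tendsto_divide_zero[OF LIMSEQ_inverse_of_nat_add]] by simp
  qed
  then show ?thesis
    using has_sum_of_real_iff[where 'a=complex, of ?f UNIV 0] by (simp only: of_real_0)
qed

lemma has_sum_quartic_quotient_lattice_eq_0:
  fixes \<omega> :: complex and y :: real
  assumes "Re \<omega> \<noteq> 0" and "\<exists>m::int. y = of_int m / (2 * Re \<omega>)"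
    and "\<not> (\<exists>m::int. complex_of_real y = of_int m / \<omega>)"
  shows "((\<lambda>k::int. (cmod \<omega> ^ 2 * y ^ 2 - of_int k ^ 2) /
            (cmod \<omega> ^ 4 * y ^ 4 - 2 * Re (\<omega> ^ 2) * of_int k ^ 2 * y ^ 2 + of_int k ^ 4))
           has_sum 0) UNIV"
proof -
  obtain m :: int where m: "y = of_int m / (2 * Re \<omega>)"
    using assms(2) by blast
  define u where "u = \<omega> * of_real y"
  have Re_u: "2 * Re u = of_int m"
    unfolding u_def m using assms(1) by simp
  have "\<omega> \<noteq> 0"
    using assms(1) by auto
  then have u_not_int: "u \<noteq> of_int k" for k
    using assms(3) unfolding u_def by (auto simp: field_simps)
  have "m \<noteq> 0"
    using assms(3) m by auto
  have summand: "(cmod \<omega> ^ 2 * y ^ 2 - of_int k ^ 2) /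
        (cmod \<omega> ^ 4 * y ^ 4 - 2 * Re (\<omega> ^ 2) * of_int k ^ 2 * y ^ 2 + of_int k ^ 4) =
      (cmod u ^ 2 - of_int k ^ 2) / (cmod u ^ 4 - 2 * Re (u ^ 2) * of_int k ^ 2 + of_int k ^ 4)"
    for k
    unfolding u_def by (simp add: norm_mult power_mult_distrib algebra_simps)
  show ?thesis
  proof (cases "m > 0")
    case True
    then show ?thesis
      using has_sum_quartic_quotient_eq_0[of u "nat m"] Re_u u_not_int by (simp add: summand)
  next
    case False
    moreover have "- u \<noteq> of_int k" for k
      using u_not_int[of "- k"] by (metis minus_minus of_int_minus)
    ultimately show ?thesis
      using has_sum_quartic_quotient_eq_0[of "- u" "nat (- m)"] Re_u \<open>m \<noteq> 0\<close>
      by (simp add: summand)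
  qed
qed

lemma not_of_real_eq_of_int_divide:
  assumes "Im \<omega> \<noteq> 0" and "y \<noteq> 0"
  shows "\<not> (\<exists>m::int. complex_of_real y = of_int m / \<omega>)"
proof
  assume "\<exists>m::int. complex_of_real y = of_int m / \<omega>"
  then obtain m :: int where "complex_of_real y = of_int m / \<omega>" ..
  then have "\<omega> * of_real y = of_int m"
    using assms(1) by (auto simp: field_simps)
  then have "Im (\<omega> * of_real y) = 0"
    by (metis complex_Im_of_int)
  with assms show False
    by simp
qed

lemma has_sum_eisenstein_quartic_eq_0:
  assumes "n \<noteq> 0"
  shows "((\<lambda>k::int. (of_int n ^ 2 - of_int k ^ 2) /
            (of_int n ^ 4 + of_int n ^ 2 * of_int k ^ 2 + of_int k ^ 4 :: real))
           has_sum 0) UNIV"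
proof -
  define \<omega> where "\<omega> = Complex (1 / 2) (sqrt 3 / 2)"
  have "cmod \<omega> ^ 2 = 1" "Re (\<omega> ^ 2) = - 1 / 2"
    unfolding \<omega>_def cmod_power2 by (simp_all add: power2_eq_square power_divide)
  moreover have "cmod \<omega> ^ 4 = (cmod \<omega> ^ 2) ^ 2"
    by simp
  moreover have "((\<lambda>k::int. (cmod \<omega> ^ 2 * of_int n ^ 2 - of_int k ^ 2) /
      (cmod \<omega> ^ 4 * of_int n ^ 4 - 2 * Re (\<omega> ^ 2) * of_int k ^ 2 * of_int n ^ 2 + of_int k ^ 4))
      has_sum 0) UNIV"
  proof (rule has_sum_quartic_quotient_lattice_eq_0)
    show "\<not> (\<exists>m::int. complex_of_real (of_int n) = of_int m / \<omega>)"
      by (rule not_of_real_eq_of_int_divide) (simp_all add: \<omega>_def assms)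
  qed (simp_all add: \<omega>_def)
  ultimately show ?thesis
    by (simp add: algebra_simps)
qed

lemma has_sum_gaussian_quartic_eq_0:
  assumes "n \<noteq> 0"
  shows "((\<lambda>k::int. (of_int n ^ 2 - 2 * of_int k ^ 2) / (of_int n ^ 4 + 4 * of_int k ^ 4 :: real))
           has_sum 0) UNIV"
proof -
  define \<omega> where "\<omega> = Complex 1 1"
  have "cmod \<omega> ^ 2 = 2" "Re (\<omega> ^ 2) = 0"
    unfolding \<omega>_def cmod_power2 by (simp_all add: power2_eq_square)
  moreover have "cmod \<omega> ^ 4 = (cmod \<omega> ^ 2) ^ 2"
    by simp
  ultimately have \<omega>: "cmod \<omega> ^ 2 = 2" "cmod \<omega> ^ 4 = 4" "Re (\<omega> ^ 2) = 0"
    by simp_all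
  have "((\<lambda>k::int. (cmod \<omega> ^ 2 * (of_int n / 2) ^ 2 - of_int k ^ 2) /
      (cmod \<omega> ^ 4 * (of_int n / 2) ^ 4 - 2 * Re (\<omega> ^ 2) * of_int k ^ 2 * (of_int n / 2) ^ 2
        + of_int k ^ 4)) has_sum 0) UNIV"
  proof (rule has_sum_quartic_quotient_lattice_eq_0)
    show "\<not> (\<exists>m::int. complex_of_real (of_int n / 2) = of_int m / \<omega>)"
      by (rule not_of_real_eq_of_int_divide) (simp_all add: \<omega>_def assms)
  qed (simp_all add: \<omega>_def)
  moreover have "(cmod \<omega> ^ 2 * (of_int n / 2) ^ 2 - of_int k ^ 2) /
      (cmod \<omega> ^ 4 * (of_int n / 2) ^ 4 - 2 * Re (\<omega> ^ 2) * of_int k ^ 2 * (of_int n / 2) ^ 2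
        + of_int k ^ 4) = 2 * ((of_int n ^ 2 - 2 * of_int k ^ 2) / (of_int n ^ 4 + 4 * of_int k ^ 4))"
    for k :: int
  proof -
    have num: "cmod \<omega> ^ 2 * (of_int n / 2) ^ 2 - of_int k ^ 2 = (of_int n ^ 2 - 2 * of_int k ^ 2) / 2"
      and den: "cmod \<omega> ^ 4 * (of_int n / 2) ^ 4 - 2 * Re (\<omega> ^ 2) * of_int k ^ 2 * (of_int n / 2) ^ 2
        + of_int k ^ 4 = (of_int n ^ 4 + 4 * of_int k ^ 4) / (4 :: real)"
      unfolding \<omega> by (simp_all add: power_divide field_simps)
    show ?thesis
      unfolding num den by (cases "of_int n ^ 4 + 4 * of_int k ^ 4 = (0 :: real)") (simp_all add: field_simps)
  qed
  ultimately have "((\<lambda>k::int. 2 * ((of_int n ^ 2 - 2 * of_int k ^ 2) / (of_int n ^ 4 + 4 * of_int k ^ 4 :: real)))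
      has_sum 0) UNIV"
    by (simp only:)
  then show ?thesis
    by (subst (asm) has_sum_cmult_right_iff) simp_all
qed

theorem mainTheorem5:
  shows "(\<forall>(\<omega>::complex) (y::real).
            Re \<omega> \<noteq> 0 \<longrightarrow>
            (\<exists>m::int. y = of_int m / (2 * Re \<omega>)) \<longrightarrow>
            \<not> (\<exists>m::int. complex_of_real y = of_int m / \<omega>) \<longrightarrow>
            \<not> (\<exists>m::int. complex_of_real y = of_int m / cnj \<omega>) \<longrightarrow>
            ((\<lambda>k::int. (cmod \<omega> ^ 2 * y ^ 2 - real_of_int k ^ 2) /
                 (cmod \<omega> ^ 4 * y ^ 4 - 2 * Re (\<omega> ^ 2) * real_of_int k ^ 2 * y ^ 2
                  + real_of_int k ^ 4)) has_sum 0) UNIV)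
       \<and> (\<forall>n::int. n \<noteq> 0 \<longrightarrow>
            ((\<lambda>k::int. (real_of_int n ^ 2 - real_of_int k ^ 2) /
                 (real_of_int n ^ 4 + real_of_int n ^ 2 * real_of_int k ^ 2 + real_of_int k ^ 4))
               has_sum 0) UNIV
          \<and> ((\<lambda>k::int. (real_of_int n ^ 2 - 2 * real_of_int k ^ 2) /
                 (real_of_int n ^ 4 + 4 * real_of_int k ^ 4))
               has_sum 0) UNIV)"
  using has_sum_quartic_quotient_lattice_eq_0 has_sum_eisenstein_quartic_eq_0
    has_sum_gaussian_quartic_eq_0
  by blast

end
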